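(* Let $(X,d)$ be a bounded metric space and let $M: X\to\mathbb{R}$ satisfy $d(x,y)\le M(x)\le d(x,z)+M(z)$ for all $x,y,z\in X$. Let $d_S$ be the subset distance on $\mathcal{F}(X)$ defined in the context. For any $X_1,X_2\in\mathcal{F}(X)$ with $|X_1|\le|X_2|$, there exists an injection $\chi_0: X_1\to X_2$ such that $d_S(X_1,X_2)=d_{\chi_0}(X_1,X_2)$ and $\chi_0(x)=x$ for all $x\in X_1\cap X_2$.
   Context: $\mathcal{F}(X)$ denotes the set of all finite subsets of $X$. For $A,B\in\mathcal{F}(X)$ with $|A|\le|B|$ and an injection $\chi:A\to B$, define $d_\chi(A,B)=\sum_{x\in A} d(x,\chi(x))+\sum_{y\in B\setminus\chi(A)} M(y)$. The subset distance is $d_S(A,B)=d_S(B,A)=\min\{d_\chi(A,B) : \chi:A\to B \text{ an injection}\}$ (for $|A|\le|B|$). *)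

theory Defs
  imports "HOL-Analysis.Analysis"
begin

definition injections :: "'a set \<Rightarrow> 'a set \<Rightarrow> ('a \<Rightarrow> 'a) set" where
  "injections A B = {ch. inj_on ch A \<and> ch ` A \<subseteq> B}"

definition d_chi :: "('a::metric_space \<Rightarrow> real) \<Rightarrow> ('a \<Rightarrow> 'a) \<Rightarrow> 'a set \<Rightarrow> 'a set \<Rightarrow> real" where
  "d_chi M ch A B = (\<Sum>x\<in>A. dist x (ch x)) + (\<Sum>y\<in>B - ch ` A. M y)"

definition d_S :: "('a::metric_space \<Rightarrow> real) \<Rightarrow> 'a set \<Rightarrow> 'a set \<Rightarrow> real" where
  "d_S M A B = (if card A \<le> card B
     then Min ((\<lambda>ch. d_chi M ch A B) ` injections A B)
     else Min ((\<lambda>ch. d_chi M ch B A) ` injections B A))"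

end

theory Submission
  imports Defs
begin

text \<open>Start from an injection \<open>\<chi>\<close> attaining \<open>d_S\<close> and remove, one at a time, the common points
  \<open>x \<in> X\<^sub>1 \<inter> X\<^sub>2\<close> with \<open>\<chi> x \<noteq> x\<close>, without increasing the cost. If \<open>x = \<chi> x'\<close>, swap the targets
  of \<open>x\<close> and \<open>x'\<close>: the cost changes by \<open>d(x', \<chi> x) - d(x', x) - d(x, \<chi> x) \<le> 0\<close>. Otherwise
  \<open>x\<close> is unmatched; send it to itself and free \<open>\<chi> x\<close> instead: the cost changes by
  \<open>M(\<chi> x) - M(x) - d(x, \<chi> x) \<le> 0\<close>.\<close>

lemma d_chi_restrict: "d_chi M (restrict ch A) A B = d_chi M ch A B"
  unfolding d_chi_def by simp

lemma finite_d_chi_image_injections: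
  assumes "finite A" "finite B"
  shows "finite ((\<lambda>ch. d_chi M ch A B) ` injections A B)"
proof -
  have "(\<lambda>ch. d_chi M ch A B) ` injections A B \<subseteq> (\<lambda>ch. d_chi M ch A B) ` (A \<rightarrow>\<^sub>E B)"
  proof
    fix v assume "v \<in> (\<lambda>ch. d_chi M ch A B) ` injections A B"
    then obtain ch where "ch \<in> injections A B" "v = d_chi M (restrict ch A) A B"
      by (auto simp: d_chi_restrict)
    moreover from this(1) have "restrict ch A \<in> A \<rightarrow>\<^sub>E B"
      by (auto simp: injections_def)
    ultimately show "v \<in> (\<lambda>ch. d_chi M ch A B) ` (A \<rightarrow>\<^sub>E B)"
      by blast
  qed
  then show ?thesis
    using assms by (meson finite_PiE finite_imageI finite_subset)
qed

lemma d_S_le_d_chi: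
  assumes "finite A" "finite B" "card A \<le> card B" "ch \<in> injections A B"
  shows "d_S M A B \<le> d_chi M ch A B"
  unfolding d_S_def using assms(3,4)
  by (simp add: Min_le finite_d_chi_image_injections[OF assms(1,2)])

lemma d_S_attained:
  assumes "finite A" "finite B" "card A \<le> card B"
  obtains ch where "ch \<in> injections A B" "d_S M A B = d_chi M ch A B"
proof -
  obtain f where "inj_on f A" "f ` A \<subseteq> B"
    using card_le_inj[OF assms] by blast
  then have "(\<lambda>ch. d_chi M ch A B) ` injections A B \<noteq> {}"
    by (auto simp: injections_def)
  with finite_d_chi_image_injections[OF assms(1,2)]
  have "Min ((\<lambda>ch. d_chi M ch A B) ` injections A B) \<in> (\<lambda>ch. d_chi M ch A B) ` injections A B"
    by (rule Min_in)
  with that assms(3) show ?thesis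
    unfolding d_S_def by auto
qed

lemma image_fun_upd_swap:
  assumes "x \<in> A" "x' \<in> A" "ch x' = x"
  shows "ch(x := x, x' := ch x) ` A = ch ` A"
  using assms by (auto simp: image_iff)

lemma injections_fun_upd_swap:
  assumes "finite A" "ch \<in> injections A B" "x \<in> A" "x' \<in> A" "ch x' = x"
  shows "ch(x := x, x' := ch x) \<in> injections A B"
proof -
  have img: "ch(x := x, x' := ch x) ` A = ch ` A"
    using assms(3-5) by (rule image_fun_upd_swap)
  have "card (ch(x := x, x' := ch x) ` A) = card A"
    using assms(2) unfolding img by (simp add: card_image injections_def)
  with assms(1) have "inj_on (ch(x := x, x' := ch x)) A"
    by (rule eq_card_imp_inj_on)
  with assms(2) show ?thesis
    unfolding injections_def mem_Collect_eq img by simp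
qed

lemma d_chi_fun_upd_swap_le:
  assumes "finite A" "x \<in> A" "x' \<in> A" "x' \<noteq> x" "ch x' = x"
  shows "d_chi M (ch(x := x, x' := ch x)) A B \<le> d_chi M ch A B"
proof -
  define ch' where "ch' = ch(x := x, x' := ch x)"
  have img: "ch' ` A = ch ` A"
    unfolding ch'_def using assms(2,3,5) by (rule image_fun_upd_swap)
  have split: "(\<Sum>z\<in>A. dist z (f z)) =
      dist x (f x) + dist x' (f x') + (\<Sum>z\<in>A - {x} - {x'}. dist z (f z))" for f :: "'a \<Rightarrow> 'a"
    using assms by (simp add: sum.remove[of A x] sum.remove[of "A - {x}" x'])
  have rest: "(\<Sum>z\<in>A - {x} - {x'}. dist z (ch' z)) = (\<Sum>z\<in>A - {x} - {x'}. dist z (ch z))"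
    by (rule sum.cong) (auto simp: ch'_def)
  have "dist x' (ch x) \<le> dist x' x + dist x (ch x)"
    by (rule dist_triangle)
  then have "dist x (ch' x) + dist x' (ch' x') \<le> dist x (ch x) + dist x' (ch x')"
    using assms by (simp add: ch'_def)
  then show ?thesis
    unfolding d_chi_def ch'_def[symmetric] img split[of ch] split[of ch'] rest by simp
qed

lemma injections_fun_upd_unmatched:
  assumes "ch \<in> injections A B" "x \<in> B" "x \<notin> ch ` A"
  shows "ch(x := x) \<in> injections A B"
  using assms by (auto simp: injections_def inj_on_def)

lemma d_chi_fun_upd_unmatched_le:
  fixes M :: "'a::metric_space \<Rightarrow> real"
  assumes M: "\<And>y z. M y \<le> dist y z + M z"
    and "finite A" "finite B" "ch \<in> injections A B" "x \<in> A" "x \<in> B" "x \<notin> ch ` A"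
  shows "d_chi M (ch(x := x)) A B \<le> d_chi M ch A B"
proof -
  have inj: "inj_on ch A" and sub: "ch ` A \<subseteq> B"
    using assms by (auto simp: injections_def)
  define R where "R = B - ch ` A - {x}"
  have "ch(x := x) ` A = insert x (ch ` (A - {x}))"
    using assms by auto
  also have "ch ` (A - {x}) = ch ` A - {ch x}"
    using inj assms by (simp add: inj_on_image_set_diff)
  finally have img: "ch(x := x) ` A = insert x (ch ` A - {ch x})" .
  have "ch x \<in> B"
    using assms(5) sub by blast
  have "ch x \<noteq> x"
    using assms(5,7) by (metis imageI)
  have "B - ch(x := x) ` A = insert (ch x) R" "B - ch ` A = insert x R"
    using assms(6,7) \<open>ch x \<in> B\<close> \<open>ch x \<noteq> x\<close> unfolding img R_def by auto
  moreover have "finite R" "x \<notin> R" "ch x \<notin> R"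
    using assms(3,5) unfolding R_def by auto
  moreover have "(\<Sum>z\<in>A. dist z (f z)) = dist x (f x) + (\<Sum>z\<in>A - {x}. dist z (f z))"
    for f :: "'a \<Rightarrow> 'a"
    using assms(2,5) by (rule sum.remove)
  moreover have "(\<Sum>z\<in>A - {x}. dist z ((ch(x := x)) z)) = (\<Sum>z\<in>A - {x}. dist z (ch z))"
    by (rule sum.cong) auto
  moreover have "M (ch x) \<le> dist (ch x) x + M x"
    by (rule M)
  ultimately show ?thesis
    unfolding d_chi_def by (simp add: dist_commute)
qed

lemma injection_fixing_common_points_step:
  fixes M :: "'a::metric_space \<Rightarrow> real"
  assumes M: "\<And>y z. M y \<le> dist y z + M z"
    and "finite A" "finite B" "ch \<in> injections A B" "x \<in> A \<inter> B" "ch x \<noteq> x"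
  obtains ch' where "ch' \<in> injections A B" "d_chi M ch' A B \<le> d_chi M ch A B"
    "{z \<in> A \<inter> B. ch' z \<noteq> z} \<subset> {z \<in> A \<inter> B. ch z \<noteq> z}"
proof (cases "x \<in> ch ` A")
  case True
  then obtain x' where x': "x' \<in> A" "ch x' = x" by auto
  with assms have "x' \<noteq> x" by auto
  have "{z \<in> A \<inter> B. (ch(x := x, x' := ch x)) z \<noteq> z} \<subseteq> {z \<in> A \<inter> B. ch z \<noteq> z} - {x}"
    using \<open>x' \<noteq> x\<close> x' by auto
  with assms x' \<open>x' \<noteq> x\<close> show ?thesis
    by (intro that[of "ch(x := x, x' := ch x)"] injections_fun_upd_swap d_chi_fun_upd_swap_le) auto
next
  case False
  have "{z \<in> A \<inter> B. (ch(x := x)) z \<noteq> z} \<subseteq> {z \<in> A \<inter> B. ch z \<noteq> z} - {x}"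
    by auto
  with assms False show ?thesis
    by (intro that[of "ch(x := x)"] injections_fun_upd_unmatched d_chi_fun_upd_unmatched_le) auto
qed

lemma injection_fixing_common_points:
  fixes M :: "'a::metric_space \<Rightarrow> real"
  assumes M: "\<And>y z. M y \<le> dist y z + M z"
    and fin: "finite A" "finite B" and "ch \<in> injections A B"
  obtains ch0 where "ch0 \<in> injections A B" "d_chi M ch0 A B \<le> d_chi M ch A B"
    "\<forall>z \<in> A \<inter> B. ch0 z = z"
  using \<open>ch \<in> injections A B\<close>
proof (induction "card {z \<in> A \<inter> B. ch z \<noteq> z}" arbitrary: ch rule: less_induct)
  case less
  show ?case
  proof (cases "\<forall>z \<in> A \<inter> B. ch z = z")
    case True
    with less.prems show ?thesis by auto
  next
    case False
    then obtain x where "x \<in> A \<inter> B" "ch x \<noteq> x" by auto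
    with M fin less.prems(2) obtain ch' where ch': "ch' \<in> injections A B"
      "d_chi M ch' A B \<le> d_chi M ch A B"
      "{z \<in> A \<inter> B. ch' z \<noteq> z} \<subset> {z \<in> A \<inter> B. ch z \<noteq> z}"
      by (rule injection_fixing_common_points_step)
    have "card {z \<in> A \<inter> B. ch' z \<noteq> z} < card {z \<in> A \<inter> B. ch z \<noteq> z}"
      using ch'(3) fin by (intro psubset_card_mono) auto
    from less.hyps[OF this _ ch'(1)] less.prems(1) ch'(2) show ?thesis
      by (meson order_trans)
  qed
qed

theorem lemma2p1:
  fixes M :: "'a::metric_space \<Rightarrow> real" and X1 X2 :: "'a set"
  assumes "bounded (UNIV :: 'a set)"
    and "\<And>x y z. dist x y \<le> M x \<and> M x \<le> dist x z + M z"
    and "finite X1" and "finite X2"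
    and "card X1 \<le> card X2"
  shows "\<exists>chi0 \<in> injections X1 X2.
           d_S M X1 X2 = d_chi M chi0 X1 X2 \<and> (\<forall>x \<in> X1 \<inter> X2. chi0 x = x)"
proof -
  have M: "\<And>y z. M y \<le> dist y z + M z"
    using assms(2) by blast
  obtain ch where ch: "ch \<in> injections X1 X2" "d_S M X1 X2 = d_chi M ch X1 X2"
    using d_S_attained[OF assms(3-5)] .
  obtain ch0 where ch0: "ch0 \<in> injections X1 X2" "d_chi M ch0 X1 X2 \<le> d_chi M ch X1 X2"
    "\<forall>z \<in> X1 \<inter> X2. ch0 z = z"
    using injection_fixing_common_points[OF M assms(3,4) ch(1)] .
  have "d_S M X1 X2 \<le> d_chi M ch0 X1 X2"
    using d_S_le_d_chi[OF assms(3-5) ch0(1)] .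
  with ch ch0 show ?thesis
    by (metis order_antisym)
qed

end
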